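(* Let $\mathcal{A}$ be a finite alphabet and let $\Sigma$ be the set of standard pairs on $\mathcal{A}$ whose rows have the form $a\,w_0\,w_1\,w_2\cdots w_{d-1}\,w_d\,w_{d+1}\,z$ (row 0) and $z\,w_0\,w_d\,w_{d-1}\cdots w_2\,w_1\,w_{d+1}\,a$ (row 1) for some $d\ge0$, letters $a,z$, and words $w_0,\dots,w_{d+1}$ where $w_0$ and $w_{d+1}$ may be empty and $w_1,\dots,w_d$ are nonempty (each $w_i$ appearing identically, not reversed, in both rows). Then $\Sigma$ is closed under inner switch moves and outer switch moves (whenever the move is defined). Moreover, if some $\mathbf{p}\in\Sigma$ has a Type, then it is of Type $\langle1\rangle$.
   Context: Let $n=\#\mathcal{A}\ge2$. A pair is $\mathbf{p}=(p_0,p_1)$ with $p_0,p_1:\mathcal{A}\to\{1,\dots,n\}$ bijections, displayed by rows (row $\varepsilon$ lists $p_\varepsilon^{-1}(1),\dots,p_\varepsilon^{-1}(n)$); words are ordered collections of distinct letters. Standard: $p_0^{-1}(1)=p_1^{-1}(n)$ and $p_1^{-1}(1)=p_0^{-1}(n)$. Inner switch: for standard $\mathbf{p}$ with rows $a\,u_1\,b\,u_2\,c\,u_3\,z$ and $z\,u_4\,b\,u_5\,c\,u_6\,a$ (letters $b,c$, possibly empty words $u_i$), the $\{b,c\}$-switch gives rows $a\,u_2\,c\,u_1\,b\,u_3\,z$ and $z\,u_5\,c\,u_4\,b\,u_6\,a$. Outer switches: for standard $\mathbf{p}$ with rows $a\,u_1\,b\,u_2\,z$ and $z\,u_3\,b\,u_4\,a$,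 the $\{a,b\}$-switch gives rows $b\,u_2\,a\,u_1\,z$ and $z\,u_4\,a\,u_3\,b$, and the $\{b,z\}$-switch gives rows $a\,u_2\,z\,u_1\,b$ and $b\,u_4\,z\,u_3\,a$. A standard pair is piece-wise order reversing if there are $2=k_0<\dots<k_\ell=n$ with $B_i=p_0^{-1}\{k_{i-1},\dots,k_i-1\}=p_1^{-1}\{k_{i-1},\dots,k_i-1\}$ and $p_0(b)+p_1(b)=k_{i-1}+k_i-1$ for $b\in B_i$; the $B_i$ are blocks ($k$-block: $k$ letters). Chains: with the $1$-blocks $S_1,\dots,S_{k-1}$ listed left to right, chain $C_i$ is the possibly empty sequence of consecutive blocks strictly between $S_{i-1}$ and $S_i$ ($C_1$ before $S_1$, $C_k$ after $S_{k-1}$). Only piece-wise order reversing pairs have a Type. Types: $\langle1\rangle$: at most one nonempty chain, consisting (if present) of one block. Types $\langle2\rangle$–$\langle5\rangle$ require more than one block of size $\ge2$, and: $\langle2\rangle$: all nonempty chains consist of $2$-blocks; $\langle3\rangle$: each nonempty chain is (i) $m$ $2$-blocks, a $3$-block, $\ell$ $2$-blocks ($m,\ell\ge0$) or (ii) $m\ge1$ $2$-blocks, with at least one chain of form (i); $\langle4\rangle$: exactly one chain is a $4$-block followed by $m\ge0$ $2$-blocks, other nonempty chains consist of $2$-blocks; $\langle5\rangle$: exactly one chain is a single $5$-block, every other nonempty chain is exactly one $2$-block. *)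

theory Defs
  imports Main
begin

text \<open>A pair over the alphabet A is represented by its two rows (row 0, row 1),
  each a list of the letters of A, listed in order of position 1,...,n.\<close>

type_synonym 'a pair = "'a list \<times> 'a list"

definition valid_pair :: "'a set \<Rightarrow> 'a pair \<Rightarrow> bool" where
  "valid_pair A p \<longleftrightarrow> distinct (fst p) \<and> distinct (snd p) \<and> set (fst p) = A \<and> set (snd p) = A"

definition pos :: "'a list \<Rightarrow> 'a \<Rightarrow> nat" where
  "pos r b = Suc (THE i. i < length r \<and> r ! i = b)"

definition standard :: "'a pair \<Rightarrow> bool" where
  "standard p \<longleftrightarrow> fst p \<noteq> [] \<and> snd p \<noteq> [] \<and>
     hd (fst p) = last (snd p) \<and> hd (snd p) = last (fst p)"

definition inner_switch :: "'a pair \<Rightarrow> 'a pair \<Rightarrow> bool" where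
  "inner_switch p q \<longleftrightarrow> standard p \<and>
     (\<exists>a b c z u1 u2 u3 u4 u5 u6.
        p = (a # u1 @ b # u2 @ c # u3 @ [z], z # u4 @ b # u5 @ c # u6 @ [a]) \<and>
        q = (a # u2 @ c # u1 @ b # u3 @ [z], z # u5 @ c # u4 @ b # u6 @ [a]))"

definition outer_switch_ab :: "'a pair \<Rightarrow> 'a pair \<Rightarrow> bool" where
  "outer_switch_ab p q \<longleftrightarrow> standard p \<and>
     (\<exists>a b z u1 u2 u3 u4.
        p = (a # u1 @ b # u2 @ [z], z # u3 @ b # u4 @ [a]) \<and>
        q = (b # u2 @ a # u1 @ [z], z # u4 @ a # u3 @ [b]))"

definition outer_switch_bz :: "'a pair \<Rightarrow> 'a pair \<Rightarrow> bool" where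
  "outer_switch_bz p q \<longleftrightarrow> standard p \<and>
     (\<exists>a b z u1 u2 u3 u4.
        p = (a # u1 @ b # u2 @ [z], z # u3 @ b # u4 @ [a]) \<and>
        q = (a # u2 @ z # u1 @ [b], b # u4 @ z # u3 @ [a]))"

definition Sigma_set :: "'a set \<Rightarrow> 'a pair set" where
  "Sigma_set A = {p. valid_pair A p \<and> standard p \<and>
     (\<exists>a z w0 wl mid. (\<forall>w\<in>set mid. w \<noteq> []) \<and>
        fst p = a # w0 @ concat mid @ wl @ [z] \<and>
        snd p = z # w0 @ concat (rev mid) @ wl @ [a])}"

definition por_witness :: "'a pair \<Rightarrow> nat list \<Rightarrow> bool" where
  "por_witness p ks \<longleftrightarrow> standard p \<and> ks \<noteq> [] \<and> sorted_wrt (<) ks \<and>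
     hd ks = 2 \<and> last ks = length (fst p) \<and>
     (\<forall>i. 0 < i \<and> i < length ks \<longrightarrow>
        {b \<in> set (fst p). ks!(i-1) \<le> pos (fst p) b \<and> pos (fst p) b < ks!i}
          = {b \<in> set (snd p). ks!(i-1) \<le> pos (snd p) b \<and> pos (snd p) b < ks!i} \<and>
        (\<forall>b \<in> set (fst p). ks!(i-1) \<le> pos (fst p) b \<and> pos (fst p) b < ks!i \<longrightarrow>
            pos (fst p) b + pos (snd p) b = ks!(i-1) + ks!i - 1))"

definition piecewise_order_reversing :: "'a pair \<Rightarrow> bool" where
  "piecewise_order_reversing p \<longleftrightarrow> (\<exists>ks. por_witness p ks)"

definition block_sizes :: "nat list \<Rightarrow> nat list" where
  "block_sizes ks = map (\<lambda>i. ks!(Suc i) - ks!i) [0..<length ks - 1]"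

text \<open>Chains: split the block sequence at the 1-blocks (k-1 one-blocks give k chains).\<close>
fun chains :: "nat list \<Rightarrow> nat list list" where
  "chains [] = [[]]"
| "chains (x # xs) = (if x = 1 then [] # chains xs
                      else (let cs = chains xs in (x # hd cs) # tl cs))"

definition type1 :: "nat list \<Rightarrow> bool" where
  "type1 bs \<longleftrightarrow> length (filter (\<lambda>c. c \<noteq> []) (chains bs)) \<le> 1 \<and>
     (\<forall>c \<in> set (chains bs). length c \<le> 1)"

definition many_big :: "nat list \<Rightarrow> bool" where
  "many_big bs \<longleftrightarrow> length (filter (\<lambda>s. 2 \<le> s) bs) > 1"

definition type2 :: "nat list \<Rightarrow> bool" where
  "type2 bs \<longleftrightarrow> many_big bs \<and> (\<forall>c \<in> set (chains bs). \<forall>s \<in> set c. s = 2)"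

definition form3i :: "nat list \<Rightarrow> bool" where
  "form3i c \<longleftrightarrow> (\<exists>m l. c = replicate m 2 @ [3] @ replicate l 2)"

definition form3ii :: "nat list \<Rightarrow> bool" where
  "form3ii c \<longleftrightarrow> (\<exists>m. m \<ge> 1 \<and> c = replicate m 2)"

definition type3 :: "nat list \<Rightarrow> bool" where
  "type3 bs \<longleftrightarrow> many_big bs \<and>
     (\<forall>c \<in> set (chains bs). c \<noteq> [] \<longrightarrow> form3i c \<or> form3ii c) \<and>
     (\<exists>c \<in> set (chains bs). form3i c)"

definition form4 :: "nat list \<Rightarrow> bool" where
  "form4 c \<longleftrightarrow> (\<exists>m. c = 4 # replicate m 2)"

definition type4 :: "nat list \<Rightarrow> bool" where
  "type4 bs \<longleftrightarrow> many_big bs \<and>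
     length (filter form4 (chains bs)) = 1 \<and>
     (\<forall>c \<in> set (chains bs). \<not> form4 c \<longrightarrow> (\<forall>s \<in> set c. s = 2))"

definition type5 :: "nat list \<Rightarrow> bool" where
  "type5 bs \<longleftrightarrow> many_big bs \<and>
     length (filter (\<lambda>c. c = [5]) (chains bs)) = 1 \<and>
     (\<forall>c \<in> set (chains bs). c \<noteq> [] \<and> c \<noteq> [5] \<longrightarrow> c = [2])"

definition has_type :: "nat \<Rightarrow> 'a pair \<Rightarrow> bool" where
  "has_type t p \<longleftrightarrow> (\<exists>ks. por_witness p ks \<and>
     (let bs = block_sizes ks in
       (t = 1 \<and> type1 bs) \<or> (t = 2 \<and> type2 bs) \<or> (t = 3 \<and> type3 bs) \<or>
       (t = 4 \<and> type4 bs) \<or> (t = 5 \<and> type5 bs)))"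

end

theory Submission
  imports Defs "HOL-Library.Sublist" "HOL-Library.Multiset"
begin

text \<open>Write the rows of a pair in Sigma as a w_0 C w_{d+1} z and z w_0 C' w_{d+1} a with
  C = w_1 ... w_d and C' = w_d ... w_1: the rows share the outer words w_0 and w_{d+1}, and the
  middle words appear in opposite orders. A switch move cuts both rows at the switched letters and
  reassembles the pieces; according to whether a cut falls into w_0, into a middle word or into
  w_{d+1}, the pieces regroup into outer and middle words of the same shape.

  Two letters occur in opposite orders in the two rows only if they lie in different middle words,
  the one in the earlier word coming first in row 0. If a piece-wise order reversing pair had two
  blocks of size at least 2, the first two letters x, y of one block and x', y' of a later one
  would be such inversions, with y before x' in row 0 and x before y' in row 1. The words containing
  x, y, x', y' are then w_i, w_j, w_i', w_j' with i < j \<le> i' < j', which puts y' before x in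
  row 1. So all blocks but one are 1-blocks, and the pair is of Type 1.\<close>

section \<open>Pairs in Sigma\<close>

text \<open>The rows with their first and last letters removed; ws lists the middle words. Unlike in
  Sigma_set, empty middle words are allowed: dropping them changes neither row.\<close>

definition sigma_middle :: "'a list \<Rightarrow> 'a list \<Rightarrow> bool" where
  "sigma_middle X Y \<longleftrightarrow> (\<exists>w0 ws wl. X = w0 @ concat ws @ wl \<and> Y = w0 @ concat (rev ws) @ wl)"

lemma sigma_middle_intro:
  "sigma_middle (w0 @ concat ws @ wl) (w0 @ concat (rev ws) @ wl)"
  unfolding sigma_middle_def by blast

lemma sigma_middle_extend:
  assumes "sigma_middle X Y"
  shows "sigma_middle (S @ X @ T) (S @ Y @ T)"
proof -
  obtain w0 ws wl where "X = w0 @ concat ws @ wl" "Y = w0 @ concat (rev ws) @ wl"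
    using assms unfolding sigma_middle_def by blast
  then show ?thesis
    using sigma_middle_intro[of "S @ w0" ws "wl @ T"] by simp
qed

lemma mset_concat_rev: "mset (concat (rev ws)) = mset (concat ws)"
  by (induction ws) (simp_all add: ac_simps)

lemma sigma_middle_mset: "sigma_middle X Y \<Longrightarrow> mset Y = mset X"
  unfolding sigma_middle_def by (auto simp: mset_concat_rev)

lemma sigma_middle_distinct: "sigma_middle X Y \<Longrightarrow> distinct X \<Longrightarrow> distinct Y"
  using mset_eq_imp_distinct_iff sigma_middle_mset by metis

lemma concat_filter_nonempty: "concat (filter (\<lambda>w. w \<noteq> []) ws) = concat ws"
  by (induction ws) auto

lemma Sigma_set_iff:
  "p \<in> Sigma_set A \<longleftrightarrow>
     valid_pair A p \<and> (\<exists>a z X Y. p = (a # X @ [z], z # Y @ [a]) \<and> sigma_middle X Y)"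
proof
  assume "p \<in> Sigma_set A"
  then obtain a z w0 ws wl where "valid_pair A p"
    and "p = (a # (w0 @ concat ws @ wl) @ [z], z # (w0 @ concat (rev ws) @ wl) @ [a])"
    unfolding Sigma_set_def by (cases p) auto
  then show "valid_pair A p \<and> (\<exists>a z X Y. p = (a # X @ [z], z # Y @ [a]) \<and> sigma_middle X Y)"
    using sigma_middle_intro by blast
next
  assume "valid_pair A p \<and> (\<exists>a z X Y. p = (a # X @ [z], z # Y @ [a]) \<and> sigma_middle X Y)"
  then obtain a z w0 ws wl where "valid_pair A p"
    and p: "p = (a # w0 @ concat ws @ wl @ [z], z # w0 @ concat (rev ws) @ wl @ [a])"
    unfolding sigma_middle_def by auto
  define ws' where "ws' = filter (\<lambda>w. w \<noteq> []) ws"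
  have "\<forall>w\<in>set ws'. w \<noteq> []" "concat ws' = concat ws" "concat (rev ws') = concat (rev ws)"
    unfolding ws'_def by (simp_all add: rev_filter concat_filter_nonempty)
  then have "\<exists>a z w0 wl mid. (\<forall>w\<in>set mid. w \<noteq> []) \<and>
      fst p = a # w0 @ concat mid @ wl @ [z] \<and> snd p = z # w0 @ concat (rev mid) @ wl @ [a]"
    using p by (intro exI[of _ a] exI[of _ z] exI[of _ w0] exI[of _ wl] exI[of _ ws']) simp
  with \<open>valid_pair A p\<close> show "p \<in> Sigma_set A"
    unfolding Sigma_set_def standard_def using p by simp
qed

lemma valid_pair_mset_eq:
  assumes "valid_pair A p" "mset (fst q) = mset (fst p)" "mset (snd q) = mset (snd p)"
  shows "valid_pair A q"
  using assms mset_eq_imp_distinct_iff mset_eq_setD unfolding valid_pair_def by metis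

lemma Sigma_set_replace_middle:
  assumes "(a # X @ [z], z # Y @ [a]) \<in> Sigma_set A" "sigma_middle X' Y'"
    and "mset (a' # X' @ [z']) = mset (a # X @ [z])" "mset (z' # Y' @ [a']) = mset (z # Y @ [a])"
  shows "(a' # X' @ [z'], z' # Y' @ [a']) \<in> Sigma_set A"
  using assms valid_pair_mset_eq[of A "(a # X @ [z], z # Y @ [a])"] unfolding Sigma_set_iff by force

section \<open>Switch moves\<close>

lemma in_set_append_concat_cases:
  assumes "b \<in> set (w0 @ concat ws @ wl)"
  obtains (prefix) u v where "w0 = u @ b # v"
  | (word) ws1 u v ws2 where "ws = ws1 @ (u @ b # v) # ws2"
  | (suffix) u v where "wl = u @ b # v"
proof -
  consider "b \<in> set w0" | w where "w \<in> set ws" "b \<in> set w" | "b \<in> set wl"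
    using assms by auto
  then show thesis
  proof cases
    case (2 w)
    then show ?thesis
      using word split_list[of w ws] split_list[of b w] by blast
  qed (use prefix suffix split_list in metis)+
qed

lemma sigma_middle_split:
  assumes S: "sigma_middle (u1 @ b # u2) (u3 @ b # u4)" and dX: "distinct (u1 @ b # u2)"
  obtains (prefix) "u1 = u3" "sigma_middle u2 u4"
  | (word) w0 ws1 s t ws2 wl where
      "u1 = w0 @ concat ws1 @ s" "u2 = t @ concat ws2 @ wl"
      "u3 = w0 @ concat (rev ws2) @ s" "u4 = t @ concat (rev ws1) @ wl"
  | (suffix) "u2 = u4" "sigma_middle u1 u3"
proof -
  obtain w0 ws wl where X: "u1 @ b # u2 = w0 @ concat ws @ wl"
    and Y: "u3 @ b # u4 = w0 @ concat (rev ws) @ wl"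
    using S unfolding sigma_middle_def by blast
  have "distinct (u3 @ b # u4)"
    using sigma_middle_distinct[OF S dX] .
  then have b: "b \<notin> set u1" "b \<notin> set u2" "b \<notin> set u3" "b \<notin> set u4"
    using dX by auto
  have "b \<in> set (w0 @ concat ws @ wl)"
    using X[symmetric] by simp
  then show thesis
  proof (cases rule: in_set_append_concat_cases)
    case (prefix s t)
    with X Y b have "u1 = s" "u2 = t @ concat ws @ wl" "u3 = s" "u4 = t @ concat (rev ws) @ wl"
      by (simp_all add: append_Cons_eq_iff)
    then show ?thesis
      using that(1) sigma_middle_intro by metis
  next
    case (word ws1 s t ws2)
    with X Y have "u1 @ b # u2 = (w0 @ concat ws1 @ s) @ b # (t @ concat ws2 @ wl)"
      "u3 @ b # u4 = (w0 @ concat (rev ws2) @ s) @ b # (t @ concat (rev ws1) @ wl)"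
      by simp_all
    with b have "u1 = w0 @ concat ws1 @ s \<and> u2 = t @ concat ws2 @ wl"
      "u3 = w0 @ concat (rev ws2) @ s \<and> u4 = t @ concat (rev ws1) @ wl"
      by (metis append_Cons_eq_iff)+
    then show ?thesis
      using that(2) by blast
  next
    case (suffix s t)
    with X Y have "u1 @ b # u2 = (w0 @ concat ws @ s) @ b # t"
      "u3 @ b # u4 = (w0 @ concat (rev ws) @ s) @ b # t"
      by simp_all
    with b have "u1 = w0 @ concat ws @ s \<and> u2 = t" "u3 = w0 @ concat (rev ws) @ s \<and> u4 = t"
      by (metis append_Cons_eq_iff)+
    then show ?thesis
      using that(3) sigma_middle_intro by blast
  qed
qed

lemma sigma_middle_outer_switch:
  assumes "sigma_middle (u1 @ b # u2) (u3 @ b # u4)" and "distinct (u1 @ b # u2)"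
  shows "sigma_middle (u2 @ c # u1) (u4 @ c # u3)"
  using assms
proof (cases rule: sigma_middle_split)
  case prefix
  then show ?thesis
    using sigma_middle_extend[of u2 u4 "[]" "c # u1"] by simp
next
  case (word w0 ws1 s t ws2 wl)
  then show ?thesis
    using sigma_middle_intro[of t "ws2 @ [wl @ c # w0] @ ws1" s] by simp
next
  case suffix
  then show ?thesis
    using sigma_middle_extend[of u1 u3 "u2 @ [c]" "[]"] by simp
qed

text \<open>The case of an inner switch where b splits the middle word s @ b # t, which lies between
  ws1 and ws2 in row 0. The letter c follows b in both rows, so it cannot lie in ws2, which
  precedes b in row 1.\<close>

lemma sigma_middle_inner_switch_in_word:
  assumes "u2 @ c # u3 = t @ concat ws2 @ wl" "u5 @ c # u6 = t @ concat (rev ws1) @ wl"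
    and c: "c \<notin> set u2" "c \<notin> set u3" "c \<notin> set u5" "c \<notin> set u6" "c \<notin> set (concat ws2)"
  shows "sigma_middle (u2 @ c # w0 @ concat ws1 @ s @ b # u3)
           (u5 @ c # w0 @ concat (rev ws2) @ s @ b # u6)"
proof -
  have "c \<in> set (t @ concat ws2 @ wl)"
    using assms(1) by (metis in_set_conv_decomp)
  then show ?thesis
  proof (cases rule: in_set_append_concat_cases)
    case (prefix p q)
    with assms(1,2) have "u2 @ c # u3 = p @ c # (q @ concat ws2 @ wl)"
      "u5 @ c # u6 = p @ c # (q @ concat (rev ws1) @ wl)"
      by simp_all
    with c have "u2 = p \<and> u3 = q @ concat ws2 @ wl" "u5 = p \<and> u6 = q @ concat (rev ws1) @ wl"
      by (metis append_Cons_eq_iff)+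
    then show ?thesis
      using sigma_middle_intro[of "p @ c # w0" "ws1 @ [s @ b # q] @ ws2" wl] by simp
  next
    case word
    then show ?thesis
      using c(5) by simp
  next
    case (suffix p q)
    with assms(1,2) have "u2 @ c # u3 = (t @ concat ws2 @ p) @ c # q"
      "u5 @ c # u6 = (t @ concat (rev ws1) @ p) @ c # q"
      by simp_all
    with c have "u2 = t @ concat ws2 @ p \<and> u3 = q" "u5 = t @ concat (rev ws1) @ p \<and> u6 = q"
      by (metis append_Cons_eq_iff)+
    then show ?thesis
      using sigma_middle_intro[of t "ws2 @ [p @ c # w0] @ ws1" "s @ b # q"] by simp
  qed
qed

lemma sigma_middle_inner_switch:
  assumes S: "sigma_middle (u1 @ b # u2 @ c # u3) (u4 @ b # u5 @ c # u6)"
    and dX: "distinct (u1 @ b # u2 @ c # u3)"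
  shows "sigma_middle (u2 @ c # u1 @ b # u3) (u5 @ c # u4 @ b # u6)"
proof -
  have "distinct (u4 @ b # u5 @ c # u6)"
    using sigma_middle_distinct[OF S dX] .
  then have c: "c \<notin> set u2" "c \<notin> set u3" "c \<notin> set u4" "c \<notin> set u5" "c \<notin> set u6"
    using dX by auto
  from S dX show ?thesis
  proof (cases rule: sigma_middle_split)
    case prefix
    have "distinct (u2 @ c # u3)"
      using dX by simp
    with prefix(2) show ?thesis
    proof (cases rule: sigma_middle_split)
      case prefix
      then show ?thesis
        using \<open>u1 = u4\<close> sigma_middle_extend[of u3 u6 "u2 @ c # u1 @ [b]" "[]"] by simp
    next
      case (word w0 ws1 s t ws2 wl)
      then show ?thesis
        using \<open>u1 = u4\<close> sigma_middle_intro[of w0 "ws1 @ [s @ c # u1 @ b # t] @ ws2" wl] by simp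
    next
      case suffix
      then show ?thesis
        using \<open>u1 = u4\<close> sigma_middle_extend[of u2 u5 "[]" "c # u1 @ b # u3"] by simp
    qed
  next
    case (word w0 ws1 s t ws2 wl)
    then show ?thesis
      using sigma_middle_inner_switch_in_word[of u2 c u3 t ws2 wl u5 u6 ws1 w0 s b] c by simp
  next
    case suffix
    with c have "u2 = u5" "u3 = u6"
      by (metis append_Cons_eq_iff)+
    then show ?thesis
      using suffix(2) sigma_middle_extend[of u1 u4 "u2 @ [c]" "b # u3"] by simp
  qed
qed

lemma Sigma_set_inner_switch:
  assumes "p \<in> Sigma_set A" "inner_switch p q"
  shows "q \<in> Sigma_set A"
proof -
  obtain a z X Y where p: "p = (a # X @ [z], z # Y @ [a])" and S: "sigma_middle X Y"
    and dX: "distinct X"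
    using assms(1) unfolding Sigma_set_iff valid_pair_def by auto
  obtain b c u1 u2 u3 u4 u5 u6 where X: "X = u1 @ b # u2 @ c # u3" and Y: "Y = u4 @ b # u5 @ c # u6"
    and q: "q = (a # (u2 @ c # u1 @ b # u3) @ [z], z # (u5 @ c # u4 @ b # u6) @ [a])"
    using assms(2) p unfolding inner_switch_def by auto
  have "sigma_middle (u2 @ c # u1 @ b # u3) (u5 @ c # u4 @ b # u6)"
    using S dX unfolding X Y by (rule sigma_middle_inner_switch)
  from Sigma_set_replace_middle[of a X z Y A, OF _ this] show ?thesis
    using assms(1) p q X Y by (simp add: add_mset_commute ac_simps)
qed

lemma Sigma_set_outer_switch_ab:
  assumes "p \<in> Sigma_set A" "outer_switch_ab p q"
  shows "q \<in> Sigma_set A"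
proof -
  obtain a z X Y where p: "p = (a # X @ [z], z # Y @ [a])" and S: "sigma_middle X Y"
    and dX: "distinct X"
    using assms(1) unfolding Sigma_set_iff valid_pair_def by auto
  obtain b u1 u2 u3 u4 where X: "X = u1 @ b # u2" and Y: "Y = u3 @ b # u4"
    and q: "q = (b # (u2 @ a # u1) @ [z], z # (u4 @ a # u3) @ [b])"
    using assms(2) p unfolding outer_switch_ab_def by auto
  have "sigma_middle (u2 @ a # u1) (u4 @ a # u3)"
    using S dX unfolding X Y by (rule sigma_middle_outer_switch)
  from Sigma_set_replace_middle[of a X z Y A, OF _ this] show ?thesis
    using assms(1) p q X Y by (simp add: add_mset_commute ac_simps)
qed

lemma Sigma_set_outer_switch_bz:
  assumes "p \<in> Sigma_set A" "outer_switch_bz p q"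
  shows "q \<in> Sigma_set A"
proof -
  obtain a z X Y where p: "p = (a # X @ [z], z # Y @ [a])" and S: "sigma_middle X Y"
    and dX: "distinct X"
    using assms(1) unfolding Sigma_set_iff valid_pair_def by auto
  obtain b u1 u2 u3 u4 where X: "X = u1 @ b # u2" and Y: "Y = u3 @ b # u4"
    and q: "q = (a # (u2 @ z # u1) @ [b], b # (u4 @ z # u3) @ [a])"
    using assms(2) p unfolding outer_switch_bz_def by auto
  have "sigma_middle (u2 @ z # u1) (u4 @ z # u3)"
    using S dX unfolding X Y by (rule sigma_middle_outer_switch)
  from Sigma_set_replace_middle[of a X z Y A, OF _ this] show ?thesis
    using assms(1) p q X Y by (simp add: add_mset_commute ac_simps)
qed

section \<open>Letters in opposite orders\<close>

lemma subseq_pair_Cons_iff: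
  "subseq [x, y] (a # r) \<longleftrightarrow> (x = a \<and> y \<in> set r) \<or> subseq [x, y] r"
  by (auto simp: subseq_singleton_left dest: subseq_Cons')

lemma subseq_pair_append_iff:
  "subseq [x, y] (u @ v) \<longleftrightarrow> subseq [x, y] u \<or> subseq [x, y] v \<or> (x \<in> set u \<and> y \<in> set v)"
  by (induction u) (auto simp del: subseq_Cons2_iff simp: subseq_pair_Cons_iff)

lemma subseq_pair_set: "subseq [x, y] r \<Longrightarrow> x \<in> set r \<and> y \<in> set r"
  by (induction r) (auto simp del: subseq_Cons2_iff simp: subseq_pair_Cons_iff)

lemma subseq_pair_asym:
  "distinct r \<Longrightarrow> subseq [x, y] r \<Longrightarrow> \<not> subseq [y, x] r"
proof (induction r)
  case (Cons a r)
  then show ?case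
    using subseq_pair_set[of x y r] subseq_pair_set[of y x r]
    by (simp del: subseq_Cons2_iff add: subseq_pair_Cons_iff) blast
qed simp

lemma subseq_pair_nth:
  assumes "i < j" "j < length r"
  shows "subseq [r ! i, r ! j] r"
proof -
  have "r ! i \<in> set (take j r)"
    using assms by (auto simp: in_set_conv_nth intro!: exI[of _ i])
  moreover have "r ! j \<in> set (drop j r)"
    using assms by (metis Cons_nth_drop_Suc list.set_intros(1))
  ultimately show ?thesis
    by (metis append_take_drop_id subseq_pair_append_iff)
qed

lemma subseq_pair_infix:
  assumes "distinct (u @ v @ w)" "subseq [x, y] (u @ v @ w)" "x \<in> set v" "y \<in> set v"
  shows "subseq [x, y] v"
  using assms by (auto simp: subseq_pair_append_iff dest: subseq_pair_set)

lemma subseq_pair_append_prefix: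
  "distinct (u @ v) \<Longrightarrow> subseq [x, y] (u @ v) \<Longrightarrow> y \<in> set u \<Longrightarrow> subseq [x, y] u"
  by (auto simp: subseq_pair_append_iff dest: subseq_pair_set)

lemma subseq_pair_append_suffix:
  "distinct (u @ v) \<Longrightarrow> subseq [x, y] (u @ v) \<Longrightarrow> x \<in> set v \<Longrightarrow> subseq [x, y] v"
  by (auto simp: subseq_pair_append_iff dest: subseq_pair_set)

lemma concat_take_nth_drop:
  "i < length ws \<Longrightarrow> concat ws = concat (take i ws) @ ws ! i @ concat (drop (Suc i) ws)"
  by (subst id_take_nth_drop[of i ws]) simp_all

lemma subseq_pair_concat_nth:
  assumes "i < j" "j < length ws" "x \<in> set (ws ! i)" "y \<in> set (ws ! j)"
  shows "subseq [x, y] (concat ws)"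
proof -
  have "ws ! i \<in> set (take j ws)"
    using assms by (auto simp: in_set_conv_nth intro!: exI[of _ i])
  then have "x \<in> set (concat (take j ws))"
    using assms(3) by auto
  moreover have "y \<in> set (concat (drop j ws))"
    using concat_take_nth_drop[of 0 "drop j ws"] assms by simp
  ultimately have "subseq [x, y] (concat (take j ws) @ concat (drop j ws))"
    by (simp add: subseq_pair_append_iff)
  then show ?thesis
    by (simp flip: concat_append)
qed

lemma in_set_concat_nth: "x \<in> set (concat ws) \<Longrightarrow> \<exists>i < length ws. x \<in> set (ws ! i)"
  by (metis UN_E in_set_conv_nth set_concat)

lemma subseq_pair_concat_index_le:
  assumes "distinct (concat ws)" "subseq [x, y] (concat ws)"
    and "i < length ws" "j < length ws" "x \<in> set (ws ! i)" "y \<in> set (ws ! j)"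
  shows "i \<le> j"
proof (rule ccontr)
  assume "\<not> i \<le> j"
  then have "subseq [y, x] (concat ws)"
    using subseq_pair_concat_nth[of j i ws y x] assms by simp
  then show False
    using subseq_pair_asym[OF assms(1,2)] by simp
qed

lemma subseq_pair_concat_same_word:
  assumes "distinct (concat ws)" "subseq [x, y] (concat ws)"
    and "i < length ws" "x \<in> set (ws ! i)" "y \<in> set (ws ! i)"
  shows "subseq [x, y] (ws ! i)"
  using subseq_pair_infix[of "concat (take i ws)" "ws ! i" "concat (drop (Suc i) ws)" x y]
    concat_take_nth_drop[OF assms(3)] assms by simp

lemma concat_rev_inversion_words:
  assumes d: "distinct (concat ws)" and xy: "subseq [x, y] (concat ws)"
    and yx: "subseq [y, x] (concat (rev ws))"
  obtains i j where "i < j" "j < length ws" "x \<in> set (ws ! i)" "y \<in> set (ws ! j)"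
proof -
  obtain i j where i: "i < length ws" "x \<in> set (ws ! i)" and j: "j < length ws" "y \<in> set (ws ! j)"
    using subseq_pair_set[OF xy] in_set_concat_nth by metis
  have "i \<noteq> j"
  proof
    assume "i = j"
    let ?k = "length ws - Suc i"
    have rev: "rev ws ! ?k = ws ! i" "?k < length (rev ws)"
      using i by (auto simp: rev_nth)
    have "distinct (ws ! i)"
      using d concat_take_nth_drop[OF i(1)] by (metis distinct_append)
    moreover have "subseq [x, y] (ws ! i)"
      using subseq_pair_concat_same_word[OF d xy i(1)] i j \<open>i = j\<close> by simp
    ultimately have "\<not> subseq [y, x] (ws ! i)"
      by (rule subseq_pair_asym)
    moreover have "subseq [y, x] (ws ! i)"
      using subseq_pair_concat_same_word[of "rev ws" y x ?k] d yx rev i j \<open>i = j\<close> by simp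
    ultimately show False
      by contradiction
  qed
  moreover have "i \<le> j"
    using subseq_pair_concat_index_le[OF d xy i(1) j(1) i(2) j(2)] .
  ultimately have "i < j"
    by simp
  then show thesis
    using that i j by blast
qed

lemma inversion_avoids_common_prefix:
  assumes d: "distinct (u @ v)" "distinct (u @ v')"
    and xy: "subseq [x, y] (u @ v)" and yx: "subseq [y, x] (u @ v')"
  shows "x \<notin> set u" "y \<notin> set u"
proof -
  show x: "x \<notin> set u"
  proof
    assume "x \<in> set u"
    then have yx_u: "subseq [y, x] u"
      by (rule subseq_pair_append_prefix[OF d(2) yx])
    then have "subseq [x, y] u"
      using subseq_pair_append_prefix[OF d(1) xy] subseq_pair_set[OF yx_u] by simp
    with yx_u show False
      using subseq_pair_asym[of u x y] d(1) by simp
  qed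
  show "y \<notin> set u"
  proof
    assume "y \<in> set u"
    then have "subseq [x, y] u"
      by (rule subseq_pair_append_prefix[OF d(1) xy])
    with x show False
      using subseq_pair_set by fastforce
  qed
qed

lemma inversion_avoids_common_suffix:
  assumes d: "distinct (v @ w)" "distinct (v' @ w)"
    and xy: "subseq [x, y] (v @ w)" and yx: "subseq [y, x] (v' @ w)"
  shows "x \<notin> set w" "y \<notin> set w"
proof -
  show y: "y \<notin> set w"
  proof
    assume "y \<in> set w"
    then have yx_w: "subseq [y, x] w"
      by (rule subseq_pair_append_suffix[OF d(2) yx])
    then have "subseq [x, y] w"
      using subseq_pair_append_suffix[OF d(1) xy] subseq_pair_set[OF yx_w] by simp
    with yx_w show False
      using subseq_pair_asym[of w x y] d(1) by simp
  qed
  show "x \<notin> set w"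
  proof
    assume "x \<in> set w"
    then have "subseq [x, y] w"
      by (rule subseq_pair_append_suffix[OF d(1) xy])
    with y show False
      using subseq_pair_set by fastforce
  qed
qed

lemma inversion_within_middle:
  assumes dX: "distinct (w0 @ C @ wl)" and dY: "distinct (w0 @ C' @ wl)" and C: "set C' = set C"
    and xy: "subseq [x, y] (w0 @ C @ wl)" and yx: "subseq [y, x] (w0 @ C' @ wl)"
  shows "subseq [x, y] C \<and> subseq [y, x] C'"
proof -
  have "x \<notin> set w0" "y \<notin> set w0"
    using inversion_avoids_common_prefix[of w0 "C @ wl" "C' @ wl"] dX dY xy yx by simp_all
  moreover have "x \<notin> set wl" "y \<notin> set wl"
    using inversion_avoids_common_suffix[of "w0 @ C" wl "w0 @ C'"] dX dY xy yx by simp_all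
  ultimately have "x \<in> set C" "y \<in> set C"
    using subseq_pair_set[OF xy] by auto
  then show ?thesis
    using subseq_pair_infix[OF dX xy] subseq_pair_infix[OF dY yx] C by simp
qed

text \<open>The inversions (x, y) and (x', y') lie in middle words i < j and i' < j' with j \<le> i',
  so the word of y' precedes the word of x in row 1.\<close>

lemma sigma_middle_inversion_chain:
  assumes S: "sigma_middle X Y" and dX: "distinct X"
    and "subseq [x, y] X" "subseq [y, x] Y"
    and "subseq [y, x'] X"
    and "subseq [x', y'] X" "subseq [y', x'] Y"
  shows "subseq [y', x] Y"
proof -
  obtain w0 ws wl where X: "X = w0 @ concat ws @ wl" and Y: "Y = w0 @ concat (rev ws) @ wl"
    using S unfolding sigma_middle_def by blast
  have dY: "distinct Y"
    using sigma_middle_distinct[OF S dX] .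
  have dC: "distinct (concat ws)"
    using dX X by simp
  have inv: "subseq [x, y] (concat ws)" "subseq [y, x] (concat (rev ws))"
    "subseq [x', y'] (concat ws)" "subseq [y', x'] (concat (rev ws))"
    using inversion_within_middle[of w0 "concat ws" wl "concat (rev ws)"] dX dY assms(3-7)
    unfolding X Y by auto
  obtain i j where ij: "i < j" "j < length ws" "x \<in> set (ws ! i)" "y \<in> set (ws ! j)"
    using concat_rev_inversion_words[OF dC inv(1,2)] .
  obtain i' j' where ij': "i' < j'" "j' < length ws" "x' \<in> set (ws ! i')" "y' \<in> set (ws ! j')"
    using concat_rev_inversion_words[OF dC inv(3,4)] .
  have "subseq [y, x'] (concat ws)"
    using subseq_pair_infix[of w0 "concat ws" wl y x'] dX assms(5) subseq_pair_set[OF inv(1)]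
      subseq_pair_set[OF inv(3)] unfolding X by simp
  then have "j \<le> i'"
    using subseq_pair_concat_index_le[OF dC] ij ij' by simp
  then have "subseq [y', x] (concat (rev ws))"
    using subseq_pair_concat_nth[of "length ws - Suc j'" "length ws - Suc i" "rev ws" y' x] ij ij'
    by (simp add: rev_nth)
  then show ?thesis
    unfolding Y by (simp add: subseq_pair_append_iff)
qed

section \<open>Blocks and the Type\<close>

lemma pos_nth: "distinct r \<Longrightarrow> i < length r \<Longrightarrow> pos r (r ! i) = Suc i"
  unfolding pos_def by (rule arg_cong[where f = Suc], rule the_equality) (auto simp: nth_eq_iff_index_eq)

lemma subseq_pair_if_pos_less:
  assumes "distinct r" "u \<in> set r" "v \<in> set r" "pos r u < pos r v"
  shows "subseq [u, v] r"
proof -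
  obtain i j where "i < length r" "r ! i = u" "j < length r" "r ! j = v"
    using assms(2,3) by (metis in_set_conv_nth)
  with assms show ?thesis
    using subseq_pair_nth[of i j r] pos_nth[OF assms(1)] by auto
qed

lemma subseq_pair_interior_if_pos_less:
  assumes "distinct (a # X @ [z])" "u \<in> set X" "v \<in> set X"
    and "pos (a # X @ [z]) u < pos (a # X @ [z]) v"
  shows "subseq [u, v] X"
  using subseq_pair_if_pos_less[OF assms(1) _ _ assms(4)] subseq_pair_infix[of "[a]" X "[z]" u v]
    assms(1-3) by simp

lemma in_set_interior_if_pos:
  assumes "distinct (a # X @ [z])" "u \<in> set (a # X @ [z])"
    and "1 < pos (a # X @ [z]) u" "pos (a # X @ [z]) u < length X + 2"
  shows "u \<in> set X"
proof -
  have "pos (a # X @ [z]) a = 1" "pos (a # X @ [z]) z = length X + 2"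
    using pos_nth[OF assms(1), of 0] pos_nth[OF assms(1), of "Suc (length X)"]
    by (simp_all add: nth_append)
  then show ?thesis
    using assms by auto
qed

lemma por_witness_nth_bounds:
  assumes W: "por_witness p ks" and i: "i < length ks"
  shows "2 \<le> ks ! i" "ks ! i \<le> length (fst p)"
proof -
  have ks: "ks \<noteq> []" "sorted_wrt (<) ks" "ks ! 0 = 2" "ks ! (length ks - 1) = length (fst p)"
    using W unfolding por_witness_def by (auto simp: hd_conv_nth last_conv_nth)
  have "ks ! 0 \<le> ks ! i" "ks ! i \<le> ks ! (length ks - 1)"
    using i strict_sorted_imp_sorted[OF ks(2)] by (simp_all add: sorted_nth_mono)
  then show "2 \<le> ks ! i" "ks ! i \<le> length (fst p)"
    using ks by simp_all
qed

lemma por_witness_pos_sum: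
  assumes W: "por_witness p ks" and t: "Suc t < length ks" and b: "b \<in> set (fst p)"
    and "ks ! t \<le> pos (fst p) b" "pos (fst p) b < ks ! Suc t"
  shows "pos (fst p) b + pos (snd p) b = ks ! t + ks ! Suc t - 1"
proof -
  have "\<forall>i. 0 < i \<and> i < length ks \<longrightarrow> (\<forall>b \<in> set (fst p).
      ks ! (i - 1) \<le> pos (fst p) b \<and> pos (fst p) b < ks ! i \<longrightarrow>
      pos (fst p) b + pos (snd p) b = ks ! (i - 1) + ks ! i - 1)"
    using W unfolding por_witness_def by blast
  from this[rule_format, of "Suc t" b] show ?thesis
    using t b assms(4,5) by simp
qed

lemma por_witness_big_block:
  assumes W: "por_witness p ks" and d: "distinct (fst p)"
    and t: "Suc t < length ks" and big: "ks ! Suc t - ks ! t \<noteq> 1"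
  obtains x y where "x \<in> set (fst p)" "y \<in> set (fst p)"
    "pos (fst p) x = ks ! t" "pos (fst p) y = Suc (ks ! t)"
    "pos (snd p) x = ks ! Suc t - 1" "pos (snd p) y = ks ! Suc t - 2"
    "ks ! t + 2 \<le> ks ! Suc t"
proof -
  have "ks ! t < ks ! Suc t"
    using W t unfolding por_witness_def by (simp add: sorted_wrt_nth_less)
  with big have gap: "ks ! t + 2 \<le> ks ! Suc t"
    by linarith
  have bounds: "2 \<le> ks ! t" "ks ! Suc t \<le> length (fst p)"
    using por_witness_nth_bounds[OF W] t by simp_all
  define x where "x = fst p ! (ks ! t - 1)"
  define y where "y = fst p ! (ks ! t)"
  have xy: "x \<in> set (fst p)" "y \<in> set (fst p)"
    using gap bounds unfolding x_def y_def by simp_all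
  have pxy: "pos (fst p) x = ks ! t" "pos (fst p) y = Suc (ks ! t)"
    using pos_nth[OF d, of "ks ! t - 1"] pos_nth[OF d, of "ks ! t"] gap bounds
    unfolding x_def y_def by simp_all
  have "pos (snd p) x = ks ! Suc t - 1" "pos (snd p) y = ks ! Suc t - 2"
    using por_witness_pos_sum[OF W t xy(1)] por_witness_pos_sum[OF W t xy(2)] pxy gap by simp_all
  with xy pxy gap show thesis
    using that by blast
qed

lemma two_le_length_filter_nth:
  "2 \<le> length (filter P xs) \<Longrightarrow> \<exists>i j. i < j \<and> j < length xs \<and> P (xs ! i) \<and> P (xs ! j)"
proof (induction xs)
  case (Cons x xs)
  show ?case
  proof (cases "P x")
    case True
    with Cons.prems have "filter P xs \<noteq> []"
      by auto
    then obtain j where "j < length xs" "P (xs ! j)"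
      by (metis filter_empty_conv in_set_conv_nth)
    with True show ?thesis
      by (intro exI[of _ 0] exI[of _ "Suc j"]) simp
  next
    case False
    with Cons obtain i j where "i < j" "j < length xs" "P (xs ! i)" "P (xs ! j)"
      by auto
    then show ?thesis
      by (intro exI[of _ "Suc i"] exI[of _ "Suc j"]) simp
  qed
qed simp

lemma por_witness_two_non_unit_blocks:
  assumes W: "por_witness (a # X @ [z], z # Y @ [a]) ks"
    and d0: "distinct (a # X @ [z])" and d1: "distinct (z # Y @ [a])" and XY: "set Y = set X"
    and ij: "i < j" "Suc j < length ks"
    and big: "ks ! Suc i - ks ! i \<noteq> 1" "ks ! Suc j - ks ! j \<noteq> 1"
  obtains x y x' y' where "subseq [x, y] X" "subseq [y, x'] X" "subseq [x', y'] X"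
    "subseq [y, x] Y" "subseq [y', x'] Y" "subseq [x, y'] Y"
proof -
  let ?p = "(a # X @ [z], z # Y @ [a])"
  have ti: "Suc i < length ks"
    using ij by simp
  obtain x y where xy: "x \<in> set (fst ?p)" "y \<in> set (fst ?p)"
    and pos_xy: "pos (fst ?p) x = ks ! i" "pos (fst ?p) y = Suc (ks ! i)"
      "pos (snd ?p) x = ks ! Suc i - 1" "pos (snd ?p) y = ks ! Suc i - 2"
    and gap: "ks ! i + 2 \<le> ks ! Suc i"
    using por_witness_big_block[OF W _ ti big(1)] d0 by auto
  obtain x' y' where xy': "x' \<in> set (fst ?p)" "y' \<in> set (fst ?p)"
    and pos_xy': "pos (fst ?p) x' = ks ! j" "pos (fst ?p) y' = Suc (ks ! j)"
      "pos (snd ?p) x' = ks ! Suc j - 1" "pos (snd ?p) y' = ks ! Suc j - 2"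
    and gap': "ks ! j + 2 \<le> ks ! Suc j"
    using por_witness_big_block[OF W _ ij(2) big(2)] d0 by auto
  have mono: "ks ! Suc i \<le> ks ! j"
    using W ij unfolding por_witness_def by (simp add: sorted_nth_mono strict_sorted_imp_sorted)
  have bounds: "2 \<le> ks ! i" "ks ! Suc j \<le> length X + 2"
    using por_witness_nth_bounds[OF W] ij ti by simp_all
  have inX: "u \<in> set X"
    if "u \<in> set (fst ?p)" "ks ! i \<le> pos (fst ?p) u" "pos (fst ?p) u < ks ! Suc j" for u
  proof -
    have "1 < pos (fst ?p) u" "pos (fst ?p) u < length X + 2"
      using that bounds by linarith+
    then show ?thesis
      using in_set_interior_if_pos[OF d0] that(1) by simp
  qed
  have "x \<in> set X" "y \<in> set X" "x' \<in> set X" "y' \<in> set X"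
    using inX[OF xy(1)] inX[OF xy(2)] inX[OF xy'(1)] inX[OF xy'(2)] pos_xy pos_xy' gap gap' mono
    by simp_all
  moreover have "pos (fst ?p) x < pos (fst ?p) y" "pos (fst ?p) y < pos (fst ?p) x'"
    "pos (fst ?p) x' < pos (fst ?p) y'"
    using pos_xy pos_xy' gap mono by simp_all
  moreover have "pos (snd ?p) y < pos (snd ?p) x" "pos (snd ?p) y' < pos (snd ?p) x'"
    "pos (snd ?p) x < pos (snd ?p) y'"
    using pos_xy pos_xy' gap gap' mono by linarith+
  ultimately have "subseq [x, y] X" "subseq [y, x'] X" "subseq [x', y'] X"
    "subseq [y, x] Y" "subseq [y', x'] Y" "subseq [x, y'] Y"
    using subseq_pair_interior_if_pos_less[OF d0] subseq_pair_interior_if_pos_less[OF d1] XY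
    by simp_all
  then show thesis
    by (rule that)
qed

lemma Sigma_set_at_most_one_non_unit_block:
  assumes P: "p \<in> Sigma_set A" and W: "por_witness p ks"
  shows "length (filter (\<lambda>s. s \<noteq> 1) (block_sizes ks)) \<le> 1"
proof (rule ccontr)
  assume "\<not> ?thesis"
  then obtain i j where ij: "i < j" "Suc j < length ks"
    and big: "ks ! Suc i - ks ! i \<noteq> 1" "ks ! Suc j - ks ! j \<noteq> 1"
    using two_le_length_filter_nth[of "\<lambda>s. s \<noteq> 1" "block_sizes ks"]
    by (auto simp: block_sizes_def)
  obtain a z X Y where p: "p = (a # X @ [z], z # Y @ [a])" and S: "sigma_middle X Y"
    and d0: "distinct (a # X @ [z])" and d1: "distinct (z # Y @ [a])"
    using P unfolding Sigma_set_iff valid_pair_def by auto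
  have dX: "distinct X" and dY: "distinct Y" and XY: "set Y = set X"
    using d0 d1 sigma_middle_mset[OF S] by (auto dest: mset_eq_setD)
  obtain x y x' y' where X: "subseq [x, y] X" "subseq [y, x'] X" "subseq [x', y'] X"
    and Y: "subseq [y, x] Y" "subseq [y', x'] Y" "subseq [x, y'] Y"
    by (rule por_witness_two_non_unit_blocks[OF W[unfolded p] d0 d1 XY ij big])
  have "subseq [y', x] Y"
    by (rule sigma_middle_inversion_chain[OF S dX X(1) Y(1) X(2) X(3) Y(2)])
  with Y(3) show False
    using subseq_pair_asym[OF dY] by blast
qed

lemma chains_not_Nil: "chains bs \<noteq> []"
  by (induction bs) (auto simp: Let_def)

lemma concat_chains: "concat (chains bs) = filter (\<lambda>s. s \<noteq> 1) bs"
proof (induction bs)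
  case (Cons s bs)
  have "concat (chains bs) = hd (chains bs) @ concat (tl (chains bs))"
    using chains_not_Nil by (metis concat.simps(2) list.exhaust_sel)
  with Cons show ?case
    by (auto simp: Let_def)
qed simp

lemma type1_if_at_most_one_non_unit_block:
  assumes "length (filter (\<lambda>s. s \<noteq> 1) bs) \<le> 1"
  shows "type1 bs"
proof -
  have "length (filter (\<lambda>c. c \<noteq> []) cs) \<le> length (concat cs)" for cs :: "nat list list"
    by (induction cs) (auto simp: neq_Nil_conv)
  moreover have "length c \<le> length (concat cs)" if "c \<in> set cs" for c and cs :: "nat list list"
    using that by (induction cs) auto
  ultimately show ?thesis
    unfolding type1_def using assms concat_chains[of bs] by (metis le_trans)
qed

theorem lemma4p8:
  fixes A :: "'a set"
  assumes "finite A" and "card A \<ge> 2"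
  shows "(\<forall>p q. p \<in> Sigma_set A \<and> inner_switch p q \<longrightarrow> q \<in> Sigma_set A) \<and>
         (\<forall>p q. p \<in> Sigma_set A \<and> outer_switch_ab p q \<longrightarrow> q \<in> Sigma_set A) \<and>
         (\<forall>p q. p \<in> Sigma_set A \<and> outer_switch_bz p q \<longrightarrow> q \<in> Sigma_set A) \<and>
         (\<forall>p \<in> Sigma_set A. (\<exists>t. has_type t p) \<longrightarrow> has_type 1 p)"
proof (intro conjI allI impI ballI)
  fix p q
  show "p \<in> Sigma_set A \<and> inner_switch p q \<Longrightarrow> q \<in> Sigma_set A"
    using Sigma_set_inner_switch by blast
  show "p \<in> Sigma_set A \<and> outer_switch_ab p q \<Longrightarrow> q \<in> Sigma_set A"
    using Sigma_set_outer_switch_ab by blast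
  show "p \<in> Sigma_set A \<and> outer_switch_bz p q \<Longrightarrow> q \<in> Sigma_set A"
    using Sigma_set_outer_switch_bz by blast
next
  fix p
  assume P: "p \<in> Sigma_set A" and "\<exists>t. has_type t p"
  then obtain ks where W: "por_witness p ks"
    unfolding has_type_def by blast
  then have "type1 (block_sizes ks)"
    using type1_if_at_most_one_non_unit_block Sigma_set_at_most_one_non_unit_block[OF P] by blast
  with W show "has_type 1 p"
    unfolding has_type_def by auto
qed

end
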